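(* Let $B$ be a C*-algebra and let $A$ be a closed *-subalgebra of $B$ satisfying the ideal intersection property and axiom (inv) relative to $B$. Let $\mathscr{R}(B)$ be the family of all regular ideals of $B$, and $\mathscr{R}_{\mathrm{inv}}(A)$ the family of all regular, $B$-invariant ideals of $A$. Then the map $$\alpha: J\in\mathscr{R}(B)\mapsto J\cap A\in\mathscr{R}_{\mathrm{inv}}(A)$$ is well defined and is a boolean algebra isomorphism (an inclusion-preserving bijection with inclusion-preserving inverse), and its inverse is given by $$\beta: I\in\mathscr{R}_{\mathrm{inv}}(A)\mapsto \mathrm{Ann}_B(\mathrm{Ann}_B(I))\in\mathscr{R}(B).$$
   Context: Ideals are closed two-sided ideals. For a C*-algebra $C$ and $S\subseteq C$, $[S]$ is the closed linear span, and $S$ is $C$-invariant if $[SC]=[CS]$. For $C$-invariant $S$, $\{x\in C: xs=0\ \forall s\in S\}=\{x\in C: sx=0\ \forall s\in S\}$, denoted $\mathrm{Ann}_C(S)$ (every ideal of $C$ is $C$-invariant). An ideal $J$ of $C$ is regular if $\mathrm{Ann}_C(\mathrm{Ann}_C(J))=J$. Regular ideals of $C$ form a boolean algebra with order given by inclusion, meet $J_1\cap J_2$, join $\mathrm{Ann}_C(\mathrm{Ann}_C(J_1+J_2))$ and negation $\mathrm{Ann}_C(J)$. $A$ satisfies the ideal intersection property relative to $B$ if $J\cap A\neq\{0\}$ for every nonzero ideal $J$ of $B$; $A$ satisfies axiom (inv) relative to $B$ if $J\cap A$ is $B$-invariant for every ideal $J$ of $B$. *)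

theory Defs
  imports "HOL-Analysis.Analysis"
begin

class cstar_algebra = real_normed_algebra + banach +
  fixes scaleC :: "complex \<Rightarrow> 'a \<Rightarrow> 'a"
    and adj :: "'a \<Rightarrow> 'a"
  assumes scaleC_scaleR: "scaleC (complex_of_real r) x = scaleR r x"
    and scaleC_add_right: "scaleC a (x + y) = scaleC a x + scaleC a y"
    and scaleC_add_left: "scaleC (a + b) x = scaleC a x + scaleC b x"
    and scaleC_scaleC: "scaleC a (scaleC b x) = scaleC (a * b) x"
    and scaleC_one: "scaleC 1 x = x"
    and norm_scaleC: "norm (scaleC a x) = cmod a * norm x"
    and mult_scaleC_left: "scaleC a x * y = scaleC a (x * y)"
    and mult_scaleC_right: "x * scaleC a y = scaleC a (x * y)"
    and adj_adj: "adj (adj x) = x"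
    and adj_add: "adj (x + y) = adj x + adj y"
    and adj_mult: "adj (x * y) = adj y * adj x"
    and adj_scaleC: "adj (scaleC a x) = scaleC (cnj a) (adj x)"
    and cstar_identity: "norm (adj x * x) = (norm x)\<^sup>2"

definition cspan :: "'a::cstar_algebra set \<Rightarrow> 'a set" where
  "cspan S = {x. \<exists>F c. finite F \<and> F \<subseteq> S \<and> x = (\<Sum>s\<in>F. scaleC (c s) s)}"

definition clspan :: "'a::cstar_algebra set \<Rightarrow> 'a set" where
  "clspan S = closure (cspan S)"

definition setprod :: "'a::cstar_algebra set \<Rightarrow> 'a set \<Rightarrow> 'a set" where
  "setprod S T = {s * t | s t. s \<in> S \<and> t \<in> T}"

definition invariant :: "'a::cstar_algebra set \<Rightarrow> 'a set \<Rightarrow> bool" where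
  "invariant C S \<longleftrightarrow> clspan (setprod S C) = clspan (setprod C S)"

definition Ann :: "'a::cstar_algebra set \<Rightarrow> 'a set \<Rightarrow> 'a set" where
  "Ann C S = {x \<in> C. \<forall>s\<in>S. x * s = 0}"

definition cstar_subalgebra :: "'a::cstar_algebra set \<Rightarrow> bool" where
  "cstar_subalgebra A \<longleftrightarrow> closed A \<and> 0 \<in> A \<and>
     (\<forall>x\<in>A. \<forall>y\<in>A. x + y \<in> A \<and> x * y \<in> A) \<and>
     (\<forall>a. \<forall>x\<in>A. scaleC a x \<in> A) \<and> (\<forall>x\<in>A. adj x \<in> A)"

definition is_ideal :: "'a::cstar_algebra set \<Rightarrow> 'a set \<Rightarrow> bool" where
  "is_ideal C J \<longleftrightarrow> J \<subseteq> C \<and> closed J \<and> 0 \<in> J \<and>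
     (\<forall>x\<in>J. \<forall>y\<in>J. x + y \<in> J) \<and> (\<forall>a. \<forall>x\<in>J. scaleC a x \<in> J) \<and>
     (\<forall>j\<in>J. \<forall>c\<in>C. j * c \<in> J \<and> c * j \<in> J)"

definition regular_ideal :: "'a::cstar_algebra set \<Rightarrow> 'a set \<Rightarrow> bool" where
  "regular_ideal C J \<longleftrightarrow> is_ideal C J \<and> Ann C (Ann C J) = J"

text \<open>Relative to B = UNIV.\<close>
definition ideal_intersection_property :: "'a::cstar_algebra set \<Rightarrow> bool" where
  "ideal_intersection_property A \<longleftrightarrow>
     (\<forall>J. is_ideal UNIV J \<and> J \<noteq> {0} \<longrightarrow> J \<inter> A \<noteq> {0})"

definition axiom_inv :: "'a::cstar_algebra set \<Rightarrow> bool" where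
  "axiom_inv A \<longleftrightarrow> (\<forall>J. is_ideal UNIV J \<longrightarrow> invariant UNIV (J \<inter> A))"

definition regular_ideals_B :: "'a::cstar_algebra set set" where
  "regular_ideals_B = {J. regular_ideal UNIV J}"

definition regular_inv_ideals :: "'a::cstar_algebra set \<Rightarrow> 'a set set" where
  "regular_inv_ideals A = {I. regular_ideal A I \<and> invariant UNIV I}"

end

theory Submission
  imports Defs
begin

text \<open>The key fact is that, under the ideal intersection property and (inv),
  \<open>Ann\<^sub>B(J \<inter> A) = Ann\<^sub>B(J)\<close> for every ideal \<open>J\<close> of \<open>B\<close>: the ideal
  \<open>Ann\<^sub>B(J \<inter> A) \<inter> J\<close> meets \<open>A\<close> trivially, because an element \<open>y\<close> of the
  intersection kills \<open>y\<^sup>*y \<in> J \<inter> A\<close>, and \<open>y(y\<^sup>*y) = 0\<close> forces \<open>y = 0\<close> by the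
  C*-identity; so that ideal is zero. Hence \<open>\<beta>(\<alpha>(J)) = Ann\<^sub>B Ann\<^sub>B J = J\<close> for regular \<open>J\<close>, and
  \<open>\<alpha>(\<beta>(I)) = Ann\<^sub>B(Ann\<^sub>B I \<inter> A) \<inter> A = Ann\<^sub>A Ann\<^sub>A I = I\<close> for regular invariant
  \<open>I\<close>, whose annihilator is an ideal of \<open>B\<close> precisely by invariance.\<close>

lemma scaleC_zero_right [simp]: "scaleC a (0::'a::cstar_algebra) = 0"
  using norm_scaleC[of a "0::'a"] by simp

lemma adj_zero [simp]: "adj (0::'a::cstar_algebra) = 0"
  using adj_add[of "0::'a" 0] by simp

lemma adj_mult_self_eq_zero: "adj x * (x::'a::cstar_algebra) = 0 \<Longrightarrow> x = 0"
  using cstar_identity[of x] by simp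

lemma mult_adj_self_eq_zero: "(x::'a::cstar_algebra) * adj x = 0 \<Longrightarrow> x = 0"
  using adj_mult_self_eq_zero[of "adj x"] by (metis adj_adj adj_zero)

lemma subset_clspan: "T \<subseteq> clspan (T::'a::cstar_algebra set)"
proof
  fix t assume "t \<in> T"
  then have "t \<in> cspan T"
    unfolding cspan_def by (intro CollectI exI[of _ "{t}"] exI[of _ "\<lambda>_. 1"]) (simp add: scaleC_one)
  then show "t \<in> clspan T"
    unfolding clspan_def using closure_subset by blast
qed

lemma Ann_antimono: "S \<subseteq> T \<Longrightarrow> Ann C T \<subseteq> Ann C S"
  unfolding Ann_def by auto

lemma Ann_eq_Ann_UNIV_inter: "Ann C S = Ann UNIV S \<inter> C"
  unfolding Ann_def by auto

lemma closed_Ann_UNIV: "closed (Ann UNIV (S::'a::cstar_algebra set))"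
proof -
  have "Ann UNIV S = (\<Inter>s\<in>S. {x. x * s = 0})"
    unfolding Ann_def by auto
  then show ?thesis
    by (auto intro!: closed_Collect_eq continuous_intros)
qed

lemma Ann_clspan: "Ann C (clspan T) = Ann C (T::'a::cstar_algebra set)"
proof
  show "Ann C (clspan T) \<subseteq> Ann C T"
    by (rule Ann_antimono[OF subset_clspan])
  show "Ann C T \<subseteq> Ann C (clspan T)"
  proof
    fix x assume x: "x \<in> Ann C T"
    have "cspan T \<subseteq> {w. x * w = 0}"
    proof
      fix v assume "v \<in> cspan T"
      then obtain F c where F: "finite F" "F \<subseteq> T" and v: "v = (\<Sum>s\<in>F. scaleC (c s) s)"
        unfolding cspan_def by auto
      have "x * v = (\<Sum>s\<in>F. scaleC (c s) (x * s))"
        by (simp add: v sum_distrib_left mult_scaleC_right)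
      also have "\<dots> = 0"
        using F x unfolding Ann_def by (auto intro!: sum.neutral)
      finally show "v \<in> {w. x * w = 0}" by simp
    qed
    then have "clspan T \<subseteq> {w. x * w = 0}"
      unfolding clspan_def
      by (rule closure_minimal) (auto intro!: closed_Collect_eq continuous_intros)
    then show "x \<in> Ann C (clspan T)"
      using x unfolding Ann_def by auto
  qed
qed

lemma is_ideal_Ann_UNIV:
  fixes S :: "'a::cstar_algebra set"
  assumes "Ann UNIV S \<subseteq> Ann UNIV (setprod UNIV S)"
  shows "is_ideal UNIV (Ann UNIV S)"
  unfolding is_ideal_def
proof (intro conjI ballI allI)
  fix x c assume x: "x \<in> Ann UNIV S"
  show "c * x \<in> Ann UNIV S"
    using x unfolding Ann_def by (auto simp: mult.assoc)
  have "\<forall>s\<in>S. x * (c * s) = 0"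
    using assms x unfolding Ann_def setprod_def by blast
  then show "x * c \<in> Ann UNIV S"
    unfolding Ann_def by (simp add: mult.assoc)
next
  show "closed (Ann UNIV S)"
    by (rule closed_Ann_UNIV)
qed (auto simp: Ann_def distrib_right mult_scaleC_left)

lemma is_ideal_Ann_UNIV_ideal:
  "is_ideal UNIV (J::'a::cstar_algebra set) \<Longrightarrow> is_ideal UNIV (Ann UNIV J)"
  by (rule is_ideal_Ann_UNIV) (auto simp: Ann_def is_ideal_def setprod_def)

lemma is_ideal_Ann_UNIV_invariant:
  fixes S :: "'a::cstar_algebra set"
  assumes "invariant UNIV S"
  shows "is_ideal UNIV (Ann UNIV S)"
proof (rule is_ideal_Ann_UNIV)
  have "Ann UNIV S \<subseteq> Ann UNIV (setprod S UNIV)"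
    unfolding Ann_def setprod_def by (auto simp: mult.assoc[symmetric])
  also have "\<dots> = Ann UNIV (setprod UNIV S)"
    using assms unfolding invariant_def by (metis Ann_clspan)
  finally show "Ann UNIV S \<subseteq> Ann UNIV (setprod UNIV S)" .
qed

text \<open>Closed ideals of a C*-algebra are self-adjoint, but proving so needs approximate
  units; the C*-identity gives the symmetry of annihilators directly.\<close>

lemma mult_Ann_UNIV_eq_zero:
  fixes J :: "'a::cstar_algebra set"
  assumes J: "is_ideal UNIV J" and x: "x \<in> Ann UNIV J" and j: "j \<in> J"
  shows "j * x = 0"
proof -
  let ?w = "x * adj x"
  have "?w \<in> Ann UNIV J"
    using is_ideal_Ann_UNIV_ideal[OF J] x unfolding is_ideal_def by blast
  moreover have "adj j * j \<in> J"
    using J j unfolding is_ideal_def by blast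
  ultimately have "?w * (adj j * j) = 0"
    unfolding Ann_def by blast
  moreover have "adj (j * ?w) * (j * ?w) = (?w * (adj j * j)) * ?w"
    by (simp add: adj_mult adj_adj mult.assoc)
  ultimately have "adj (j * ?w) * (j * ?w) = 0"
    by simp
  then have "j * ?w = 0"
    by (rule adj_mult_self_eq_zero)
  moreover have "(j * x) * adj (j * x) = (j * ?w) * adj j"
    by (simp add: adj_mult mult.assoc)
  ultimately have "(j * x) * adj (j * x) = 0"
    by simp
  then show ?thesis
    by (rule mult_adj_self_eq_zero)
qed

lemma ideal_subset_Ann_Ann:
  "is_ideal UNIV (J::'a::cstar_algebra set) \<Longrightarrow> J \<subseteq> Ann UNIV (Ann UNIV J)"
  using mult_Ann_UNIV_eq_zero unfolding Ann_def by blast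

lemma regular_ideal_Ann_UNIV:
  fixes J :: "'a::cstar_algebra set"
  assumes J: "is_ideal UNIV J"
  shows "regular_ideal UNIV (Ann UNIV J)"
proof -
  have K: "is_ideal UNIV (Ann UNIV J)"
    using is_ideal_Ann_UNIV_ideal[OF J] .
  have "Ann UNIV (Ann UNIV (Ann UNIV J)) \<subseteq> Ann UNIV J"
    by (rule Ann_antimono[OF ideal_subset_Ann_Ann[OF J]])
  with ideal_subset_Ann_Ann[OF K] show ?thesis
    unfolding regular_ideal_def using K by blast
qed

lemma Ann_inter_self_subset_zero:
  fixes S :: "'a::cstar_algebra set"
  assumes "\<And>s. s \<in> S \<Longrightarrow> adj s * s \<in> S"
  shows "Ann C S \<inter> S \<subseteq> {0}"
proof
  fix y assume y: "y \<in> Ann C S \<inter> S"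
  let ?x = "adj y * y"
  have "y * ?x = 0"
    using y assms unfolding Ann_def by blast
  then have "adj ?x * ?x = 0"
    by (simp add: adj_mult adj_adj mult.assoc)
  then show "y \<in> {0}"
    by (auto dest!: adj_mult_self_eq_zero)
qed

lemma is_ideal_Int: "is_ideal C I \<Longrightarrow> is_ideal C J \<Longrightarrow> is_ideal C (I \<inter> J)"
  unfolding is_ideal_def by auto

lemma is_ideal_inter_subalgebra:
  "is_ideal UNIV J \<Longrightarrow> cstar_subalgebra A \<Longrightarrow> is_ideal A (J \<inter> A)"
  unfolding is_ideal_def cstar_subalgebra_def by (auto intro: closed_Int)

locale iip_inv_subalgebra =
  fixes A :: "'a::cstar_algebra set"
  assumes subalgebra: "cstar_subalgebra A"
    and iip: "ideal_intersection_property A"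
    and inv: "axiom_inv A"
begin

lemma Ann_UNIV_inter_eq:
  assumes J: "is_ideal UNIV J"
  shows "Ann UNIV (J \<inter> A) = Ann UNIV J"
proof
  show "Ann UNIV J \<subseteq> Ann UNIV (J \<inter> A)"
    by (rule Ann_antimono) blast
  let ?N = "Ann UNIV (J \<inter> A)"
  have N: "is_ideal UNIV ?N"
    using inv J unfolding axiom_inv_def by (blast intro: is_ideal_Ann_UNIV_invariant)
  have "adj s * s \<in> J \<inter> A" if "s \<in> J \<inter> A" for s
    using that J subalgebra unfolding is_ideal_def cstar_subalgebra_def by blast
  then have "?N \<inter> J \<inter> A \<subseteq> {0}"
    using Ann_inter_self_subset_zero[of "J \<inter> A" UNIV] by (simp add: Int_assoc)
  moreover have "0 \<in> ?N \<inter> J \<inter> A"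
    using N J subalgebra unfolding is_ideal_def cstar_subalgebra_def by blast
  moreover have "is_ideal UNIV (?N \<inter> J)"
    using N J by (rule is_ideal_Int)
  ultimately have NJ: "?N \<inter> J = {0}"
    using iip unfolding ideal_intersection_property_def by blast
  show "?N \<subseteq> Ann UNIV J"
  proof
    fix x assume x: "x \<in> ?N"
    have "x * j \<in> ?N \<inter> J" if "j \<in> J" for j
      using N J x that unfolding is_ideal_def by blast
    then show "x \<in> Ann UNIV J"
      using NJ unfolding Ann_def by blast
  qed
qed

lemma Ann_Ann_inter_regular:
  "J \<in> regular_ideals_B \<Longrightarrow> Ann UNIV (Ann UNIV (J \<inter> A)) = J"
  unfolding regular_ideals_B_def regular_ideal_def by (simp add: Ann_UNIV_inter_eq)

lemma inter_mem_regular_inv_ideals: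
  assumes "J \<in> regular_ideals_B"
  shows "J \<inter> A \<in> regular_inv_ideals A"
proof -
  have J: "is_ideal UNIV J" and JJ: "Ann UNIV (Ann UNIV J) = J"
    using assms unfolding regular_ideals_B_def regular_ideal_def by auto
  have "Ann A (Ann A (J \<inter> A)) = Ann UNIV (Ann UNIV J \<inter> A) \<inter> A"
    by (simp add: Ann_eq_Ann_UNIV_inter[of A] Ann_UNIV_inter_eq[OF J])
  also have "\<dots> = J \<inter> A"
    by (simp add: Ann_UNIV_inter_eq[OF is_ideal_Ann_UNIV_ideal[OF J]] JJ)
  finally show ?thesis
    using J inv is_ideal_inter_subalgebra[OF J subalgebra]
    unfolding regular_inv_ideals_def regular_ideal_def axiom_inv_def by blast
qed

lemma Ann_Ann_inter_regular_inv:
  assumes "I \<in> regular_inv_ideals A"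
  shows "Ann UNIV (Ann UNIV I) \<inter> A = I"
proof -
  have "is_ideal UNIV (Ann UNIV I)"
    using assms unfolding regular_inv_ideals_def by (blast intro: is_ideal_Ann_UNIV_invariant)
  then have "Ann UNIV (Ann UNIV I) \<inter> A = Ann A (Ann A I)"
    by (simp add: Ann_eq_Ann_UNIV_inter[of A] Ann_UNIV_inter_eq)
  also have "\<dots> = I"
    using assms unfolding regular_inv_ideals_def regular_ideal_def by blast
  finally show ?thesis .
qed

lemma inter_subset_inter_iff:
  assumes "J1 \<in> regular_ideals_B" "J2 \<in> regular_ideals_B"
  shows "J1 \<inter> A \<subseteq> J2 \<inter> A \<longleftrightarrow> J1 \<subseteq> J2"
  using Ann_antimono[OF Ann_antimono, of "J1 \<inter> A" "J2 \<inter> A" UNIV UNIV]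
  by (auto simp: assms Ann_Ann_inter_regular)

end

lemma Ann_Ann_mem_regular_ideals_B:
  "invariant UNIV I \<Longrightarrow> Ann UNIV (Ann UNIV I) \<in> regular_ideals_B"
  unfolding regular_ideals_B_def by (blast intro: regular_ideal_Ann_UNIV is_ideal_Ann_UNIV_invariant)

theorem theorem3p5:
  fixes A :: "'a::cstar_algebra set"
  assumes "cstar_subalgebra A"
    and "ideal_intersection_property A"
    and "axiom_inv A"
  shows "(\<forall>J\<in>regular_ideals_B. J \<inter> A \<in> regular_inv_ideals A)
    \<and> bij_betw (\<lambda>J. J \<inter> A) regular_ideals_B (regular_inv_ideals A)
    \<and> (\<forall>J1\<in>regular_ideals_B. \<forall>J2\<in>regular_ideals_B. J1 \<subseteq> J2 \<longleftrightarrow> J1 \<inter> A \<subseteq> J2 \<inter> A)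
    \<and> (\<forall>I\<in>regular_inv_ideals A.
         Ann UNIV (Ann UNIV I) \<in> regular_ideals_B \<and> Ann UNIV (Ann UNIV I) \<inter> A = I)"
proof -
  interpret iip_inv_subalgebra A
    using assms by unfold_locales
  have \<beta>_regular: "\<forall>I\<in>regular_inv_ideals A. Ann UNIV (Ann UNIV I) \<in> regular_ideals_B"
    unfolding regular_inv_ideals_def by (blast intro: Ann_Ann_mem_regular_ideals_B)
  have "bij_betw (\<lambda>J. J \<inter> A) regular_ideals_B (regular_inv_ideals A)"
    by (rule bij_betw_byWitness[where f' = "\<lambda>I. Ann UNIV (Ann UNIV I)"])
      (use \<beta>_regular in \<open>auto simp: Ann_Ann_inter_regular Ann_Ann_inter_regular_inv
        inter_mem_regular_inv_ideals\<close>)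
  with \<beta>_regular show ?thesis
    using inter_mem_regular_inv_ideals inter_subset_inter_iff Ann_Ann_inter_regular_inv by blast
qed

end
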